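(* Consider a graphical constant-sum game with a fully-mixed Nash equilibrium $\hat{\mathbf{x}}^*=(\mathbf{x}^*_1,\ldots,\mathbf{x}^*_m)$, and suppose each agent $i$ uses a learning dynamic whose learning operator with shift $\mathbf{x}^*_i$ is finitely lossless via a storage function $L^i$, so that the merged learning operator with shift $\hat{\mathbf{x}}^*$ is finitely lossless via $L_1(\hat{\mathbf{q}})=\sum_iL^i(\mathbf{q}_i)$. Then the feedback interconnection system of this merged learning operator with the game operator with shift $\hat{\mathbf{x}}^*$ is finitely lossless via the storage function $L_1$: for every initial state, every external input $\mathbf{r}$ and every $t\ge0$, $L_1(\hat{\mathbf{q}}(t))=L_1(\hat{\mathbf{q}}(0))+\int_0^t\langle\mathbf{r}(\tau),\hat{\mathbf{x}}(\tau)-\hat{\mathbf{x}}^*\rangle\,d\tau$. In particular, when $\mathbf{r}\equiv\mathbf{0}$, $L_1(\hat{\mathbf{q}}(t))$ is constant in $t$.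
   Context: Agent $i\in\{1,\ldots,m\}$ has $n_i$ actions; $\Delta^{n}=\{\mathbf{x}\in\mathbb{R}^n:x_j\ge0,\sum_jx_j=1\}$, $\Delta=\prod_i\Delta^{n_i}$. A graphical game has matrices $\mathbf{A}^{ik}\in\mathbb{R}^{n_i\times n_k}$ ($i\ne k$); agent $i$'s payoff vector is $\mathbf{p}_i=\sum_{k\neq i}\mathbf{A}^{ik}\mathbf{x}_k$ and payoff $\langle\mathbf{x}_i,\mathbf{p}_i\rangle$; it is constant-sum if $\mathbf{A}^{ik}_{j\ell}+\mathbf{A}^{ki}_{\ell j}=c^{\{i,k\}}$ for constants $c^{\{i,k\}}$ and all $j,\ell$. A Nash equilibrium $\hat{\mathbf{x}}^*\in\Delta$ has each $\mathbf{x}^*_i$ a best response to the others; fully mixed means all entries positive. A learning dynamic over $n$ actions has conversion function $f:\mathbb{R}^n\to\Delta^n$, state $\mathbf{q}(t)=\mathbf{q}^0+\int_0^t\mathbf{u}(\tau)d\tau$ for input $\mathbf{u}$, and strategy $\mathbf{x}=f(\mathbf{q})$; its learning operator with shift $\mathbf{x}^*$ outputs $\mathbf{x}-\mathbf{x}^*$ and is finitely lossless via $L$ if $L$ is bounded below and $L(\mathbf{q}(t))=L(\mathbf{q}^0)+\int_0^t\langle\mathbf{u},\mathbf{x}-\mathbf{x}^*\rangle d\tau$ for all initial states, inputs and $t$. The merged learning operator concatenates the agents' operators (input $\hat{\mathbf{u}}$, state $\hat{\mathbf{q}}$, output $\hat{\mathbf{x}}-\hat{\mathbf{x}}^*$).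 The game operator with shift $\hat{\mathbf{x}}^*$ maps input $\hat{\mathbf{x}}-\hat{\mathbf{x}}^*$ to output $-\hat{\mathbf{p}}$. The feedback interconnection system with external input $\mathbf{r}$ is defined by: the merged learning operator's input is $\hat{\mathbf{u}}=\mathbf{r}-(-\hat{\mathbf{p}})=\mathbf{r}+\hat{\mathbf{p}}$, its output $\hat{\mathbf{x}}-\hat{\mathbf{x}}^*$ is the game operator's input, and $\hat{\mathbf{p}}$ is computed from $\hat{\mathbf{x}}$ by the game; the system's output is $\hat{\mathbf{x}}-\hat{\mathbf{x}}^*$. Solutions are assumed to exist and be unique. *)

theory Defs
  imports "HOL-Analysis.Analysis"
begin

text \<open>Vectors in R^n are represented as functions nat => real; only the
  components j < n are meaningful.  A vector "lies in R^n" if its components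
  j >= n vanish (a normal form).\<close>

definition in_Rn :: "nat \<Rightarrow> (nat \<Rightarrow> real) \<Rightarrow> bool" where
  "in_Rn n v \<longleftrightarrow> (\<forall>j\<ge>n. v j = 0)"

definition ip :: "nat \<Rightarrow> (nat \<Rightarrow> real) \<Rightarrow> (nat \<Rightarrow> real) \<Rightarrow> real" where
  "ip n a b = (\<Sum>j<n. a j * b j)"

definition prob_simplex :: "nat \<Rightarrow> (nat \<Rightarrow> real) \<Rightarrow> bool" where
  "prob_simplex n x \<longleftrightarrow> (\<forall>j<n. 0 \<le> x j) \<and> (\<Sum>j<n. x j) = 1"

definition adm_input :: "nat \<Rightarrow> (real \<Rightarrow> nat \<Rightarrow> real) \<Rightarrow> bool" where
  "adm_input n u \<longleftrightarrow> (\<forall>j<n. \<forall>t\<ge>0. (\<lambda>\<tau>. u \<tau> j) integrable_on {0..t})"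

definition learn_state :: "nat \<Rightarrow> (nat \<Rightarrow> real) \<Rightarrow> (real \<Rightarrow> nat \<Rightarrow> real) \<Rightarrow> real \<Rightarrow> nat \<Rightarrow> real" where
  "learn_state n q0 u t = (\<lambda>j. if j < n then q0 j + integral {0..t} (\<lambda>\<tau>. u \<tau> j) else 0)"

definition conversion_fun :: "nat \<Rightarrow> ((nat \<Rightarrow> real) \<Rightarrow> (nat \<Rightarrow> real)) \<Rightarrow> bool" where
  "conversion_fun n f \<longleftrightarrow> (\<forall>q. in_Rn n q \<longrightarrow> prob_simplex n (f q))"

text \<open>The learning operator with shift xs (input u, output f(q) - xs) is finitely
  lossless via L.\<close>
definition finitely_lossless ::
  "nat \<Rightarrow> ((nat \<Rightarrow> real) \<Rightarrow> (nat \<Rightarrow> real)) \<Rightarrow> (nat \<Rightarrow> real) \<Rightarrow> ((nat \<Rightarrow> real) \<Rightarrow> real) \<Rightarrow> bool" where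
  "finitely_lossless n f xs L \<longleftrightarrow>
     (\<exists>c. \<forall>q. in_Rn n q \<longrightarrow> c \<le> L q) \<and>
     (\<forall>q0 u t. in_Rn n q0 \<and> adm_input n u \<and> 0 \<le> t \<longrightarrow>
        ((\<lambda>\<tau>. ip n (u \<tau>) (\<lambda>j. f (learn_state n q0 u \<tau>) j - xs j))
           has_integral (L (learn_state n q0 u t) - L q0)) {0..t})"

text \<open>Graphical games: m agents, agent i has n i actions, A i k j l is entry (j,l)
  of the matrix A^{ik}.  Profiles: x i j.\<close>
definition payoff_vec ::
  "nat \<Rightarrow> (nat \<Rightarrow> nat) \<Rightarrow> (nat \<Rightarrow> nat \<Rightarrow> nat \<Rightarrow> nat \<Rightarrow> real) \<Rightarrow> nat \<Rightarrow> (nat \<Rightarrow> nat \<Rightarrow> real) \<Rightarrow> nat \<Rightarrow> real" where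
  "payoff_vec m n A i x = (\<lambda>j. if j < n i then (\<Sum>k\<in>{..<m} - {i}. \<Sum>l<n k. A i k j l * x k l) else 0)"

definition constant_sum :: "nat \<Rightarrow> (nat \<Rightarrow> nat) \<Rightarrow> (nat \<Rightarrow> nat \<Rightarrow> nat \<Rightarrow> nat \<Rightarrow> real) \<Rightarrow> bool" where
  "constant_sum m n A \<longleftrightarrow> (\<forall>i<m. \<forall>k<m. i \<noteq> k \<longrightarrow>
      (\<exists>c. \<forall>j<n i. \<forall>l<n k. A i k j l + A k i l j = c))"

definition profile :: "nat \<Rightarrow> (nat \<Rightarrow> nat) \<Rightarrow> (nat \<Rightarrow> nat \<Rightarrow> real) \<Rightarrow> bool" where
  "profile m n x \<longleftrightarrow> (\<forall>i<m. prob_simplex (n i) (x i))"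

definition nash_eq :: "nat \<Rightarrow> (nat \<Rightarrow> nat) \<Rightarrow> (nat \<Rightarrow> nat \<Rightarrow> nat \<Rightarrow> nat \<Rightarrow> real) \<Rightarrow> (nat \<Rightarrow> nat \<Rightarrow> real) \<Rightarrow> bool" where
  "nash_eq m n A xs \<longleftrightarrow> profile m n xs \<and>
     (\<forall>i<m. \<forall>y. prob_simplex (n i) y \<longrightarrow>
        ip (n i) y (payoff_vec m n A i xs) \<le> ip (n i) (xs i) (payoff_vec m n A i xs))"

definition fully_mixed :: "nat \<Rightarrow> (nat \<Rightarrow> nat) \<Rightarrow> (nat \<Rightarrow> nat \<Rightarrow> real) \<Rightarrow> bool" where
  "fully_mixed m n xs \<longleftrightarrow> (\<forall>i<m. \<forall>j<n i. 0 < xs i j)"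

text \<open>Solution of the feedback interconnection with external input r:
  agent i's learning operator receives input u_i = r_i + p_i, where p is the
  payoff vector of the strategies x_k = f_k(q_k); q_i(t) = q_i(0) + int_0^t u_i.\<close>
definition fb_input ::
  "nat \<Rightarrow> (nat \<Rightarrow> nat) \<Rightarrow> (nat \<Rightarrow> nat \<Rightarrow> nat \<Rightarrow> nat \<Rightarrow> real) \<Rightarrow> (nat \<Rightarrow> (nat \<Rightarrow> real) \<Rightarrow> (nat \<Rightarrow> real))
   \<Rightarrow> (real \<Rightarrow> nat \<Rightarrow> nat \<Rightarrow> real) \<Rightarrow> (real \<Rightarrow> nat \<Rightarrow> nat \<Rightarrow> real) \<Rightarrow> nat \<Rightarrow> real \<Rightarrow> nat \<Rightarrow> real" where
  "fb_input m n A f r qh i = (\<lambda>\<tau> j. r \<tau> i j + payoff_vec m n A i (\<lambda>k. f k (qh \<tau> k)) j)"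

definition fb_solution ::
  "nat \<Rightarrow> (nat \<Rightarrow> nat) \<Rightarrow> (nat \<Rightarrow> nat \<Rightarrow> nat \<Rightarrow> nat \<Rightarrow> real) \<Rightarrow> (nat \<Rightarrow> (nat \<Rightarrow> real) \<Rightarrow> (nat \<Rightarrow> real))
   \<Rightarrow> (real \<Rightarrow> nat \<Rightarrow> nat \<Rightarrow> real) \<Rightarrow> (real \<Rightarrow> nat \<Rightarrow> nat \<Rightarrow> real) \<Rightarrow> bool" where
  "fb_solution m n A f r qh \<longleftrightarrow> (\<forall>i<m.
      in_Rn (n i) (qh 0 i) \<and>
      adm_input (n i) (fb_input m n A f r qh i) \<and>
      (\<forall>t\<ge>0. qh t i = learn_state (n i) (qh 0 i) (fb_input m n A f r qh i) t))"

definition ext_input_adm :: "nat \<Rightarrow> (nat \<Rightarrow> nat) \<Rightarrow> (real \<Rightarrow> nat \<Rightarrow> nat \<Rightarrow> real) \<Rightarrow> bool" where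
  "ext_input_adm m n r \<longleftrightarrow> (\<forall>i<m. adm_input (n i) (\<lambda>\<tau>. r \<tau> i))"

definition merged_storage :: "nat \<Rightarrow> (nat \<Rightarrow> (nat \<Rightarrow> real) \<Rightarrow> real) \<Rightarrow> (nat \<Rightarrow> nat \<Rightarrow> real) \<Rightarrow> real" where
  "merged_storage m L qh = (\<Sum>i<m. L i (qh i))"

definition fb_finitely_lossless ::
  "nat \<Rightarrow> (nat \<Rightarrow> nat) \<Rightarrow> (nat \<Rightarrow> nat \<Rightarrow> nat \<Rightarrow> nat \<Rightarrow> real) \<Rightarrow> (nat \<Rightarrow> (nat \<Rightarrow> real) \<Rightarrow> (nat \<Rightarrow> real))
   \<Rightarrow> (nat \<Rightarrow> nat \<Rightarrow> real) \<Rightarrow> ((nat \<Rightarrow> nat \<Rightarrow> real) \<Rightarrow> real) \<Rightarrow> bool" where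
  "fb_finitely_lossless m n A f xs L1 \<longleftrightarrow>
     (\<exists>c. \<forall>qh. (\<forall>i<m. in_Rn (n i) (qh i)) \<longrightarrow> c \<le> L1 qh) \<and>
     (\<forall>r qh t. ext_input_adm m n r \<and> fb_solution m n A f r qh \<and> 0 \<le> t \<longrightarrow>
        ((\<lambda>\<tau>. \<Sum>i<m. ip (n i) (r \<tau> i) (\<lambda>j. f i (qh \<tau> i) j - xs i j))
           has_integral (L1 (qh t) - L1 (qh 0))) {0..t})"

end

theory Submission imports Defs begin

(* Along a solution of the interconnection, agent i's learning operator receives r_i + p_i, so
   adding up the agents' lossless identities gives the claim as soon as the game part contributes
   nothing, i.e. as soon as  sum_i <p_i(x), x_i - e_i> = 0  for every profile x, where e is the
   equilibrium.  Put T(x, y) = sum_i <x_i, p_i(y)>.  Constant sum makes T(x, y) + T(y, x)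
   independent of the profiles x and y, and since e is a fully-mixed Nash equilibrium every
   p_i(e) is constant on the actions of agent i, so T(x, e) = T(e, e).  Hence
   T(x, x) = T(e, e) = T(e, x), and the sum above is T(x, x) - T(e, x) = 0. *)

lemma ip_commute: "ip n a b = ip n b a"
  unfolding ip_def by (simp add: mult.commute)

lemma ip_add_left: "ip n (\<lambda>j. a j + b j) c = ip n a c + ip n b c"
  unfolding ip_def by (simp add: algebra_simps sum.distrib)

lemma ip_diff_right: "ip n a (\<lambda>j. b j - c j) = ip n a b - ip n a c"
  unfolding ip_def by (simp add: algebra_simps sum_subtractf)

lemma ip_prob_simplex_const:
  assumes "prob_simplex n y" and "\<forall>j<n. p j = c"
  shows "ip n y p = c"
proof -
  have "ip n y p = (\<Sum>j<n. y j) * c"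
    unfolding ip_def using assms(2) by (simp add: sum_distrib_right)
  then show ?thesis
    using assms(1) unfolding prob_simplex_def by simp
qed

lemma prob_simplex_unit: "l < n \<Longrightarrow> prob_simplex n (\<lambda>j. if j = l then 1 else 0)"
  unfolding prob_simplex_def by simp

lemma ip_unit_left: "l < n \<Longrightarrow> ip n (\<lambda>j. if j = l then 1 else 0) p = p l"
  unfolding ip_def by (simp add: if_distrib [of "\<lambda>c. c * p _"] cong: if_cong)

lemma full_support_best_response_indifferent:
  assumes x: "prob_simplex n x" and pos: "\<forall>j<n. 0 < x j"
    and best: "\<forall>y. prob_simplex n y \<longrightarrow> ip n y p \<le> ip n x p"
  shows "\<forall>j<n. p j = ip n x p"
proof -
  let ?v = "ip n x p"
  have le: "p j \<le> ?v" if "j < n" for j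
  proof -
    have "ip n (\<lambda>i. if i = j then 1 else 0) p \<le> ?v"
      using best prob_simplex_unit [OF that] by blast
    then show ?thesis
      by (simp only: ip_unit_left [OF that])
  qed
  have "(\<Sum>j<n. x j * (?v - p j)) = (\<Sum>j<n. x j) * ?v - ?v"
    unfolding ip_def by (simp add: right_diff_distrib sum_subtractf sum_distrib_right)
  also have "\<dots> = 0"
    using x unfolding prob_simplex_def by simp
  finally have sum_zero: "(\<Sum>j<n. x j * (?v - p j)) = 0" .
  have nonneg: "0 \<le> x j * (?v - p j)" if "j \<in> {..<n}" for j
    using x le that unfolding prob_simplex_def by simp
  have zero: "\<forall>j\<in>{..<n}. x j * (?v - p j) = 0"
    using sum_nonneg_eq_0_iff [OF finite_lessThan nonneg] sum_zero by (rule iffD1)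
  show ?thesis
  proof (intro allI impI)
    fix j
    assume "j < n"
    then have "x j * (?v - p j) = 0" and "0 < x j"
      using zero pos by simp_all
    then show "p j = ?v"
      by simp
  qed
qed

lemma nash_eq_payoff_indifferent:
  assumes "nash_eq m n A xs" and "fully_mixed m n xs" and "i < m" and "prob_simplex (n i) y"
  shows "ip (n i) y (payoff_vec m n A i xs) = ip (n i) (xs i) (payoff_vec m n A i xs)"
proof -
  have x: "prob_simplex (n i) (xs i)"
    and best: "\<forall>y. prob_simplex (n i) y \<longrightarrow>
      ip (n i) y (payoff_vec m n A i xs) \<le> ip (n i) (xs i) (payoff_vec m n A i xs)"
    using assms(1,3) unfolding nash_eq_def profile_def by blast+
  have pos: "\<forall>j<n i. 0 < xs i j"
    using assms(2,3) unfolding fully_mixed_def by blast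
  have "\<forall>j<n i. payoff_vec m n A i xs j = ip (n i) (xs i) (payoff_vec m n A i xs)"
    by (rule full_support_best_response_indifferent [OF x pos best])
  then show ?thesis
    by (rule ip_prob_simplex_const [OF assms(4)])
qed

definition pair_payoff ::
  "(nat \<Rightarrow> nat) \<Rightarrow> (nat \<Rightarrow> nat \<Rightarrow> nat \<Rightarrow> nat \<Rightarrow> real) \<Rightarrow> nat \<Rightarrow> nat \<Rightarrow> (nat \<Rightarrow> real) \<Rightarrow> (nat \<Rightarrow> real) \<Rightarrow> real"
  where "pair_payoff n A i k y w = (\<Sum>j<n i. \<Sum>l<n k. y j * A i k j l * w l)"

lemma ip_payoff_vec:
  "ip (n i) y (payoff_vec m n A i x) = (\<Sum>k\<in>{..<m} - {i}. pair_payoff n A i k y (x k))"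
proof -
  have "ip (n i) y (payoff_vec m n A i x) =
      (\<Sum>j<n i. \<Sum>k\<in>{..<m} - {i}. \<Sum>l<n k. y j * A i k j l * x k l)"
    unfolding ip_def payoff_vec_def by (simp add: sum_distrib_left mult.assoc)
  also have "\<dots> = (\<Sum>k\<in>{..<m} - {i}. pair_payoff n A i k y (x k))"
    unfolding pair_payoff_def by (rule sum.swap)
  finally show ?thesis .
qed

lemma pair_payoff_constant_sum:
  assumes "\<forall>j<n i. \<forall>l<n k. A i k j l + A k i l j = c"
    and "prob_simplex (n i) y" and "prob_simplex (n k) w"
  shows "pair_payoff n A i k y w + pair_payoff n A k i w y = c"
proof -
  have "pair_payoff n A i k y w + pair_payoff n A k i w y =
      (\<Sum>j<n i. \<Sum>l<n k. (A i k j l + A k i l j) * y j * w l)"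
    unfolding pair_payoff_def
    by (subst (2) sum.swap) (simp add: sum.distrib [symmetric] algebra_simps)
  also have "\<dots> = (\<Sum>j<n i. \<Sum>l<n k. c * y j * w l)"
    using assms(1) by (intro sum.cong refl) auto
  also have "\<dots> = c * (\<Sum>j<n i. y j) * (\<Sum>l<n k. w l)"
    by (simp add: sum_distrib_left sum_distrib_right mult_ac)
  also have "\<dots> = c"
    using assms(2,3) unfolding prob_simplex_def by simp
  finally show ?thesis .
qed

lemma sum_offdiag_swap:
  fixes g :: "nat \<Rightarrow> nat \<Rightarrow> 'a::comm_monoid_add"
  shows "(\<Sum>i<m. \<Sum>k\<in>{..<m} - {i}. g i k) = (\<Sum>i<m. \<Sum>k\<in>{..<m} - {i}. g k i)"
proof -
  have "{..<m} - {i} = {k. k \<in> {..<m} \<and> i \<noteq> k}" for i :: nat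
    by auto
  moreover have "{..<m} - {i} = {k. k \<in> {..<m} \<and> k \<noteq> i}" for i :: nat
    by auto
  ultimately show ?thesis
    using sum.swap_restrict [of "{..<m}" "{..<m}" g "\<lambda>i k. i \<noteq> k"] by simp
qed

definition total_payoff ::
  "nat \<Rightarrow> (nat \<Rightarrow> nat) \<Rightarrow> (nat \<Rightarrow> nat \<Rightarrow> nat \<Rightarrow> nat \<Rightarrow> real) \<Rightarrow> (nat \<Rightarrow> nat \<Rightarrow> real) \<Rightarrow> (nat \<Rightarrow> nat \<Rightarrow> real) \<Rightarrow> real"
  where "total_payoff m n A x y = (\<Sum>i<m. ip (n i) (x i) (payoff_vec m n A i y))"

lemma total_payoff_add_swap:
  "total_payoff m n A x y + total_payoff m n A y x =
    (\<Sum>i<m. \<Sum>k\<in>{..<m} - {i}. pair_payoff n A i k (x i) (y k) + pair_payoff n A k i (y k) (x i))"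
proof -
  have "total_payoff m n A y x = (\<Sum>i<m. \<Sum>k\<in>{..<m} - {i}. pair_payoff n A k i (y k) (x i))"
    unfolding total_payoff_def ip_payoff_vec by (rule sum_offdiag_swap)
  then show ?thesis
    unfolding total_payoff_def ip_payoff_vec by (simp add: sum.distrib)
qed

lemma constant_sum_total_payoff:
  assumes "constant_sum m n A"
    and "profile m n x" and "profile m n y" and "profile m n x'" and "profile m n y'"
  shows "total_payoff m n A x y + total_payoff m n A y x =
    total_payoff m n A x' y' + total_payoff m n A y' x'"
proof -
  have pair_sum: "pair_payoff n A i k (x i) (y k) + pair_payoff n A k i (y k) (x i) =
      pair_payoff n A i k (x' i) (y' k) + pair_payoff n A k i (y' k) (x' i)"
    if "i \<in> {..<m}" and "k \<in> {..<m} - {i}" for i k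
  proof -
    have ik: "i < m" "k < m" "i \<noteq> k"
      using that by auto
    then obtain c where c: "\<forall>j<n i. \<forall>l<n k. A i k j l + A k i l j = c"
      using assms(1) unfolding constant_sum_def by blast
    have "pair_payoff n A i k (x i) (y k) + pair_payoff n A k i (y k) (x i) = c"
      and "pair_payoff n A i k (x' i) (y' k) + pair_payoff n A k i (y' k) (x' i) = c"
      using assms(2-5) ik unfolding profile_def by (simp_all add: pair_payoff_constant_sum [OF c])
    then show ?thesis
      by simp
  qed
  show ?thesis
    unfolding total_payoff_add_swap by (intro sum.cong refl) (rule pair_sum)
qed

lemma nash_eq_total_payoff:
  assumes "nash_eq m n A xs" and "fully_mixed m n xs" and "profile m n x"
  shows "total_payoff m n A x xs = total_payoff m n A xs xs"
  unfolding total_payoff_def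
  using assms nash_eq_payoff_indifferent unfolding profile_def by (intro sum.cong refl) blast

lemma payoff_deviation_sum_zero:
  assumes cs: "constant_sum m n A" and ne: "nash_eq m n A xs" and fm: "fully_mixed m n xs"
    and x: "profile m n x"
  shows "(\<Sum>i<m. ip (n i) (payoff_vec m n A i x) (\<lambda>j. x i j - xs i j)) = 0"
proof -
  have xs: "profile m n xs"
    using ne unfolding nash_eq_def by blast
  let ?T = "total_payoff m n A"
  have "?T x x + ?T x x = ?T xs xs + ?T xs xs"
    using constant_sum_total_payoff [OF cs x x xs xs] .
  moreover have "?T xs x + ?T x xs = ?T xs xs + ?T xs xs"
    using constant_sum_total_payoff [OF cs xs x xs xs] .
  moreover have "?T x xs = ?T xs xs"
    using nash_eq_total_payoff [OF ne fm x] .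
  ultimately have "?T x x - ?T xs x = 0"
    by simp
  then show ?thesis
    unfolding total_payoff_def ip_diff_right
    by (simp add: ip_commute [of _ "payoff_vec m n A _ x"] sum_subtractf)
qed

lemma merged_storage_bounded_below:
  assumes "\<forall>i<m. finitely_lossless (n i) (f i) (xs i) (L i)"
  shows "\<exists>c. \<forall>qh. (\<forall>i<m. in_Rn (n i) (qh i)) \<longrightarrow> c \<le> merged_storage m L qh"
proof -
  have "\<forall>i. \<exists>c. i < m \<longrightarrow> (\<forall>q. in_Rn (n i) q \<longrightarrow> c \<le> L i q)"
    using assms unfolding finitely_lossless_def by blast
  then obtain c where "\<forall>i<m. \<forall>q. in_Rn (n i) q \<longrightarrow> c i \<le> L i q"
    by metis
  then show ?thesis
    unfolding merged_storage_def by (intro exI [of _ "\<Sum>i<m. c i"]) (auto intro: sum_mono)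
qed

lemma merged_storage_has_integral:
  assumes "\<forall>i<m. finitely_lossless (n i) (f i) (xs i) (L i)"
    and "\<forall>i<m. in_Rn (n i) (q0 i)" and "\<forall>i<m. adm_input (n i) (u i)" and "0 \<le> t"
  shows "((\<lambda>\<tau>. \<Sum>i<m. ip (n i) (u i \<tau>) (\<lambda>j. f i (learn_state (n i) (q0 i) (u i) \<tau>) j - xs i j))
    has_integral (merged_storage m L (\<lambda>i. learn_state (n i) (q0 i) (u i) t) - merged_storage m L q0))
    {0..t}"
  unfolding merged_storage_def sum_subtractf [symmetric]
  using assms unfolding finitely_lossless_def by (intro has_integral_sum) auto

lemma fb_solution_learn_state:
  assumes "fb_solution m n A f r qh" and "i < m" and "0 \<le> t"
  shows "qh t i = learn_state (n i) (qh 0 i) (fb_input m n A f r qh i) t"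
  using assms unfolding fb_solution_def by blast

lemma fb_solution_profile:
  assumes "fb_solution m n A f r qh" and "\<forall>i<m. conversion_fun (n i) (f i)" and "0 \<le> t"
  shows "profile m n (\<lambda>i. f i (qh t i))"
proof -
  have "in_Rn (n i) (qh t i)" if "i < m" for i
    unfolding fb_solution_learn_state [OF assms(1) that assms(3)]
    by (simp add: in_Rn_def learn_state_def)
  then show ?thesis
    using assms(2) unfolding profile_def conversion_fun_def by blast
qed

lemma fb_solution_storage_has_integral:
  assumes cs: "constant_sum m n A" and ne: "nash_eq m n A xs" and fm: "fully_mixed m n xs"
    and cf: "\<forall>i<m. conversion_fun (n i) (f i)"
    and fl: "\<forall>i<m. finitely_lossless (n i) (f i) (xs i) (L i)"
    and sol: "fb_solution m n A f r qh" and t: "0 \<le> t"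
  shows "((\<lambda>\<tau>. \<Sum>i<m. ip (n i) (r \<tau> i) (\<lambda>j. f i (qh \<tau> i) j - xs i j))
    has_integral (merged_storage m L (qh t) - merged_storage m L (qh 0))) {0..t}"
proof -
  let ?u = "fb_input m n A f r qh"
  let ?q = "\<lambda>\<tau> i. learn_state (n i) (qh 0 i) (?u i) \<tau>"
  have state: "?q \<tau> i = qh \<tau> i" if "i < m" and "0 \<le> \<tau>" for i \<tau>
    using fb_solution_learn_state [OF sol that] by simp
  have "\<forall>i<m. in_Rn (n i) (qh 0 i)" and "\<forall>i<m. adm_input (n i) (?u i)"
    using sol unfolding fb_solution_def by blast+
  then have learning: "((\<lambda>\<tau>. \<Sum>i<m. ip (n i) (?u i \<tau>) (\<lambda>j. f i (?q \<tau> i) j - xs i j))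
      has_integral (merged_storage m L (?q t) - merged_storage m L (qh 0))) {0..t}"
    using merged_storage_has_integral [OF fl _ _ t] by blast
  have storage: "merged_storage m L (?q t) = merged_storage m L (qh t)"
    unfolding merged_storage_def using state t by simp
  have integrand: "(\<Sum>i<m. ip (n i) (?u i \<tau>) (\<lambda>j. f i (?q \<tau> i) j - xs i j)) =
      (\<Sum>i<m. ip (n i) (r \<tau> i) (\<lambda>j. f i (qh \<tau> i) j - xs i j))"
    if "\<tau> \<in> {0..t}" for \<tau>
  proof -
    let ?x = "\<lambda>k. f k (qh \<tau> k)"
    have "(\<Sum>i<m. ip (n i) (?u i \<tau>) (\<lambda>j. f i (?q \<tau> i) j - xs i j)) =
        (\<Sum>i<m. ip (n i) (?u i \<tau>) (\<lambda>j. ?x i j - xs i j))"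
      using that by (intro sum.cong refl) (simp add: state)
    also have "\<dots> = (\<Sum>i<m. ip (n i) (r \<tau> i) (\<lambda>j. ?x i j - xs i j)) +
        (\<Sum>i<m. ip (n i) (payoff_vec m n A i ?x) (\<lambda>j. ?x i j - xs i j))"
      by (simp add: fb_input_def ip_add_left sum.distrib)
    also have "\<dots> = (\<Sum>i<m. ip (n i) (r \<tau> i) (\<lambda>j. ?x i j - xs i j))"
      using that payoff_deviation_sum_zero [OF cs ne fm fb_solution_profile [OF sol cf]] by simp
    finally show ?thesis .
  qed
  show ?thesis
    using has_integral_eq [OF integrand learning [unfolded storage]] .
qed

theorem corollaryC1:
  fixes m :: nat and n :: "nat \<Rightarrow> nat"
    and A :: "nat \<Rightarrow> nat \<Rightarrow> nat \<Rightarrow> nat \<Rightarrow> real"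
    and xs :: "nat \<Rightarrow> nat \<Rightarrow> real"
    and f :: "nat \<Rightarrow> (nat \<Rightarrow> real) \<Rightarrow> (nat \<Rightarrow> real)"
    and L :: "nat \<Rightarrow> (nat \<Rightarrow> real) \<Rightarrow> real"
  assumes "constant_sum m n A"
    and "nash_eq m n A xs"
    and "fully_mixed m n xs"
    and "\<forall>i<m. conversion_fun (n i) (f i)"
    and "\<forall>i<m. finitely_lossless (n i) (f i) (xs i) (L i)"
  shows "fb_finitely_lossless m n A f xs (merged_storage m L) \<and>
    (\<forall>qh t. fb_solution m n A f (\<lambda>_ _ _. 0) qh \<and> 0 \<le> t \<longrightarrow>
        merged_storage m L (qh t) = merged_storage m L (qh 0))"
proof
  note storage_integral = fb_solution_storage_has_integral [OF assms]
  show "fb_finitely_lossless m n A f xs (merged_storage m L)"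
    unfolding fb_finitely_lossless_def
    using merged_storage_bounded_below [OF assms(5)] storage_integral by blast
  show "\<forall>qh t. fb_solution m n A f (\<lambda>_ _ _. 0) qh \<and> 0 \<le> t \<longrightarrow>
      merged_storage m L (qh t) = merged_storage m L (qh 0)"
  proof (intro allI impI, elim conjE)
    fix qh t
    assume "fb_solution m n A f (\<lambda>_ _ _. 0) qh" and "0 \<le> (t::real)"
    from storage_integral [OF this]
    have "((\<lambda>_. 0) has_integral (merged_storage m L (qh t) - merged_storage m L (qh 0))) {0..t}"
      by (simp add: ip_def)
    then show "merged_storage m L (qh t) = merged_storage m L (qh 0)"
      using has_integral_0_eq by (metis eq_iff_diff_eq_0)
  qed
qed

end
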